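(* Let $\vec w=(w_1,\dots,w_n)\in[0,1]^n$ with $\sum_{i=1}^n w_i=1$. Then there is a distributive family $\Gamma=\{f_i:[0,1]^n\to[0,1]: i=1,\dots,n\}$ on $\langle [0,1], S_{LK}, T_P\rangle$ such that $DYOWA_\Gamma(\vec x)=OWA_{\vec w}(\vec x)$ for all $\vec x\in[0,1]^n$. That is, every Yager OWA function is a DYOWA function.
   Context: $T_P(x,y)=xy$ (product t-norm) and $S_{LK}(x,y)=\min(x+y,1)$ (Łukasiewicz t-conorm) on $[0,1]$; $n$-ary versions by left folding, e.g. $\bigoplus_{i=1}^n x_i=(\cdots((x_1\oplus x_2)\oplus x_3)\cdots)\oplus x_n$ with $\oplus=S_{LK}$, $\otimes=T_P$. Yager's OWA: $OWA_{\vec w}(x_1,\dots,x_n)=\sum_{i=1}^n w_i x_{(i)}$, where $(x_{(1)},\dots,x_{(n)})$ is the decreasing rearrangement of $(x_1,\dots,x_n)$. A finite family $\Gamma=\{f_i:L^n\to L\}$ is a weight function family on $\langle L,\oplus,\otimes\rangle$ if $\bigoplus_{i=1}^n f_i(\vec a)=\top_L$ for every $\vec a$; it is a distributive family if moreover $c\otimes\bigl(\bigoplus_{i=1}^n f_i(\vec a)\bigr)=\bigoplus_{i=1}^n (c\otimes f_i(\vec a))$ for all $c\in L$, $\vec a\in L^n$. The Lizasoain–Moreno function is $\mathscr{LM}(a_1,\dots,a_n)=(b_1,\dots,b_n)$ with $b_k=\bigvee_{\{j_1<\dots<j_k\}\subseteq\{1,\dots,n\}} a_{j_1}\wedge\cdots\wedge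 a_{j_k}$ (join over all $k$-element subsets). $DYOWA_\Gamma(\vec a)=\bigoplus_{i=1}^n \bigl(f_i(\vec a)\otimes b_i\bigr)$, where $(b_1,\dots,b_n)=\mathscr{LM}(\vec a)$. *)

theory Defs
  imports Complex_Main
begin

text \<open>Vectors in [0,1]^n are represented as real lists of length n; indices are 0-based
  (position i of the list corresponds to index i+1 of the paper).\<close>

definition T_P :: "real \<Rightarrow> real \<Rightarrow> real" where
  "T_P x y = x * y"

definition S_LK :: "real \<Rightarrow> real \<Rightarrow> real" where
  "S_LK x y = min (x + y) 1"

definition S_LK_fold :: "real list \<Rightarrow> real" where
  "S_LK_fold xs = (case xs of [] \<Rightarrow> 0 | y # ys \<Rightarrow> foldl S_LK y ys)"

definition in_cube :: "nat \<Rightarrow> real list \<Rightarrow> bool" where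
  "in_cube n a \<longleftrightarrow> length a = n \<and> (\<forall>x\<in>set a. 0 \<le> x \<and> x \<le> 1)"

definition weight_family :: "nat \<Rightarrow> (nat \<Rightarrow> real list \<Rightarrow> real) \<Rightarrow> bool" where
  "weight_family n f \<longleftrightarrow>
     (\<forall>a. in_cube n a \<longrightarrow>
        (\<forall>i<n. 0 \<le> f i a \<and> f i a \<le> 1) \<and>
        S_LK_fold (map (\<lambda>i. f i a) [0..<n]) = 1)"

definition distributive_family :: "nat \<Rightarrow> (nat \<Rightarrow> real list \<Rightarrow> real) \<Rightarrow> bool" where
  "distributive_family n f \<longleftrightarrow> weight_family n f \<and>
     (\<forall>c a. 0 \<le> c \<and> c \<le> 1 \<and> in_cube n a \<longrightarrow>
        T_P c (S_LK_fold (map (\<lambda>i. f i a) [0..<n])) =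
        S_LK_fold (map (\<lambda>i. T_P c (f i a)) [0..<n]))"

text \<open>Lizasoain--Moreno: k-th component (k = 1..n) is the join over all k-element
  index subsets of the meet of the corresponding entries (join = Max, meet = Min on [0,1]).\<close>
definition LM :: "real list \<Rightarrow> nat \<Rightarrow> real" where
  "LM a k = Max {Min ((\<lambda>j. a ! j) ` J) | J. J \<subseteq> {0..<length a} \<and> card J = k}"

definition DYOWA :: "nat \<Rightarrow> (nat \<Rightarrow> real list \<Rightarrow> real) \<Rightarrow> real list \<Rightarrow> real" where
  "DYOWA n f a = S_LK_fold (map (\<lambda>i. T_P (f i a) (LM a (i + 1))) [0..<n])"

definition OWA :: "real list \<Rightarrow> real list \<Rightarrow> real" where
  "OWA w a = (\<Sum>i<length a. w ! i * rev (sort a) ! i)"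

end

theory Submission
  imports Defs "HOL-Combinatorics.List_Permutation"
begin

text \<open>Take the constant weights \<open>f i \<equiv> w i\<close>. As long as all partial sums stay
  in \<open>[0,1]\<close>, the Lukasiewicz t-conorm is plain addition, so distributivity of the product
  is distributivity of multiplication over a sum, and \<open>DYOWA\<close> becomes \<open>\<Sum> w\<^sub>i b\<^sub>i\<close>.
  Finally the \<open>k\<close>-th Lizasoain--Moreno component is the \<open>k\<close>-th largest entry: a \<open>k\<close>-element
  index set contains an index of rank \<open>\<ge> k\<close>, and the \<open>k\<close> largest entries attain the bound.\<close>

lemma foldl_S_LK_eq_min_sum_list:
  assumes "\<forall>z\<in>set ys. 0 \<le> z" "y \<le> 1"
  shows "foldl S_LK y ys = min (y + sum_list ys) 1"
  using assms
proof (induction ys arbitrary: y)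
  case Nil
  then show ?case by simp
next
  case (Cons z zs)
  have "foldl S_LK y (z # zs) = foldl S_LK (min (y + z) 1) zs" by (simp add: S_LK_def)
  also have "\<dots> = min (min (y + z) 1 + sum_list zs) 1" using Cons by simp
  also have "\<dots> = min (y + sum_list (z # zs)) 1"
    using Cons.prems sum_list_nonneg[of zs] by (auto simp: min_def)
  finally show ?case .
qed

lemma S_LK_fold_eq_min_sum_list:
  assumes "\<forall>z\<in>set xs. 0 \<le> z \<and> z \<le> 1"
  shows "S_LK_fold xs = min (sum_list xs) 1"
  using assms by (cases xs) (auto simp: S_LK_fold_def foldl_S_LK_eq_min_sum_list)

lemma T_P_S_LK_fold_distrib:
  assumes "\<forall>z\<in>set xs. 0 \<le> z \<and> z \<le> 1" "sum_list xs \<le> 1" "0 \<le> c" "c \<le> 1"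
  shows "T_P c (S_LK_fold xs) = S_LK_fold (map (T_P c) xs)"
proof -
  have "\<forall>z\<in>set (map (T_P c) xs). 0 \<le> z \<and> z \<le> 1"
    using assms by (auto simp: T_P_def mult_le_one)
  moreover have "sum_list (map (T_P c) xs) = c * sum_list xs"
    by (induction xs) (simp_all add: T_P_def algebra_simps)
  ultimately have "S_LK_fold (map (T_P c) xs) = min (c * sum_list xs) 1"
    by (simp add: S_LK_fold_eq_min_sum_list)
  also have "\<dots> = c * sum_list xs"
    using assms mult_le_one[of c "sum_list xs"] sum_list_nonneg[of xs] by simp
  finally show ?thesis
    using assms by (simp add: S_LK_fold_eq_min_sum_list T_P_def)
qed

lemma distributive_family_const_weights:
  assumes "length w = n" "\<forall>z\<in>set w. 0 \<le> z \<and> z \<le> 1" "sum_list w = 1"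
  shows "distributive_family n (\<lambda>i _. w ! i)"
proof -
  have map_w: "map (\<lambda>i. w ! i) [0..<n] = w"
    using assms(1) map_nth[of w] by simp
  have "S_LK_fold w = 1"
    using assms by (simp add: S_LK_fold_eq_min_sum_list)
  then show ?thesis
    using assms T_P_S_LK_fold_distrib[of w]
    by (auto simp: distributive_family_def weight_family_def map_w
        map_map[of "T_P _" "(!) w", symmetric, simplified comp_def])
qed

lemma Min_nth_le_nth_card:
  fixes s :: "'a::linorder list"
  assumes "sorted (rev s)" "J \<subseteq> {0..<length s}" "card J = k" "1 \<le> k"
  shows "Min ((!) s ` J) \<le> s ! (k - 1)"
proof -
  have "\<not> J \<subseteq> {0..<k - 1}"
    using card_mono[of "{0..<k - 1}" J] assms(3,4) by auto
  then obtain j where j: "j \<in> J" "k - 1 \<le> j"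
    by (meson atLeastLessThan_iff not_le subsetI zero_le)
  have "Min ((!) s ` J) \<le> s ! j"
    using j(1) finite_subset[OF assms(2)] by (intro Min_le) auto
  also have "\<dots> \<le> s ! (k - 1)"
    using sorted_rev_nth_mono[OF assms(1) j(2)] j(1) assms(2) by auto
  finally show ?thesis .
qed

lemma LM_candidates_mono_mset:
  assumes "mset xs = mset ys"
  shows "{Min ((!) xs ` J) | J. J \<subseteq> {0..<length xs} \<and> card J = k}
       \<subseteq> {Min ((!) ys ` J) | J. J \<subseteq> {0..<length ys} \<and> card J = k}"
proof
  fix v assume "v \<in> {Min ((!) xs ` J) | J. J \<subseteq> {0..<length xs} \<and> card J = k}"
  then obtain J where J: "J \<subseteq> {0..<length xs}" "card J = k" "v = Min ((!) xs ` J)"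
    by blast
  obtain f where f: "bij_betw f {..<length xs} {..<length ys}"
    "\<forall>i<length xs. xs ! i = ys ! f i"
    using permutation_Ex_bij[OF assms] by blast
  have "(!) xs ` J = (!) ys ` f ` J"
    using f(2) J(1) by (force simp: image_iff)
  moreover have "f ` J \<subseteq> {0..<length ys}"
    using f(1) J(1) by (auto simp: bij_betw_def atLeast0LessThan)
  moreover have "card (f ` J) = k"
    using J f(1) by (metis atLeast0LessThan bij_betw_def card_image inj_on_subset)
  ultimately show "v \<in> {Min ((!) ys ` J) | J. J \<subseteq> {0..<length ys} \<and> card J = k}"
    using J(3) by auto
qed

lemma LM_mset_eq:
  assumes "mset xs = mset ys"
  shows "LM xs k = LM ys k"
  using LM_candidates_mono_mset[OF assms] LM_candidates_mono_mset[OF assms[symmetric]]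
  unfolding LM_def by (metis (no_types, lifting) subset_antisym)

lemma LM_sorted_rev:
  assumes "sorted (rev s)" "1 \<le> k" "k \<le> length s"
  shows "LM s k = s ! (k - 1)"
  unfolding LM_def
proof (rule Max_eqI)
  show "finite {Min ((!) s ` J) | J. J \<subseteq> {0..<length s} \<and> card J = k}"
    by (rule finite_subset[where B = "(\<lambda>J. Min ((!) s ` J)) ` Pow {0..<length s}"]) auto
  show "v \<le> s ! (k - 1)" if "v \<in> {Min ((!) s ` J) | J. J \<subseteq> {0..<length s} \<and> card J = k}"
    for v
    using that Min_nth_le_nth_card[OF assms(1) _ _ assms(2)] by blast
  have "Min ((!) s ` {0..<k}) = s ! (k - 1)"
  proof (rule Min_eqI)
    show "s ! (k - 1) \<le> y" if "y \<in> (!) s ` {0..<k}" for y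
      using that sorted_rev_nth_mono[OF assms(1)] assms(3) by auto
  qed (use assms(2) in auto)
  then show "s ! (k - 1) \<in> {Min ((!) s ` J) | J. J \<subseteq> {0..<length s} \<and> card J = k}"
    using assms(3) by (intro CollectI exI[of _ "{0..<k}"]) auto
qed

lemma LM_eq_nth_rev_sort:
  assumes "1 \<le> k" "k \<le> length x"
  shows "LM x k = rev (sort x) ! (k - 1)"
  using LM_mset_eq[of x "rev (sort x)" k] LM_sorted_rev[of "rev (sort x)" k] assms by simp

lemma DYOWA_const_weights_eq_OWA:
  assumes "length w = n" "\<forall>z\<in>set w. 0 \<le> z \<and> z \<le> 1" "sum_list w = 1" "in_cube n x"
  shows "DYOWA n (\<lambda>i _. w ! i) x = OWA w x"
proof -
  define s where "s = rev (sort x)"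
  have len_x: "length x = n" using assms(4) by (simp add: in_cube_def)
  have w_nth: "0 \<le> w ! i \<and> w ! i \<le> 1" if "i < n" for i using assms(1,2) that by auto
  have s_nth: "0 \<le> s ! i \<and> s ! i \<le> 1" if "i < n" for i
  proof -
    have "s ! i \<in> set s" using that len_x by (intro nth_mem) (simp add: s_def)
    then have "s ! i \<in> set x" by (simp add: s_def)
    then show ?thesis using assms(4) by (auto simp: in_cube_def)
  qed
  have terms: "map (\<lambda>i. T_P (w ! i) (LM x (i + 1))) [0..<n] = map (\<lambda>i. w ! i * s ! i) [0..<n]"
    using len_x by (simp add: T_P_def LM_eq_nth_rev_sort s_def)
  have "(\<Sum>i<n. w ! i * s ! i) \<le> (\<Sum>i<n. w ! i)"
    using w_nth s_nth by (intro sum_mono mult_right_le_one_le) auto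
  also have "\<dots> = 1"
    using assms(1,3) by (simp add: sum_list_sum_nth atLeast0LessThan)
  finally have "(\<Sum>i<n. w ! i * s ! i) \<le> 1" .
  moreover have "\<forall>z\<in>set (map (\<lambda>i. w ! i * s ! i) [0..<n]). 0 \<le> z \<and> z \<le> 1"
    using w_nth s_nth assms(1,2) by (auto intro: mult_le_one)
  ultimately show ?thesis
    unfolding DYOWA_def terms OWA_def len_x s_def[symmetric]
    by (simp add: S_LK_fold_eq_min_sum_list interv_sum_list_conv_sum_set_nat atLeast0LessThan)
qed

theorem corollary1:
  fixes w :: "real list" and n :: nat
  assumes "length w = n"
    and "\<forall>x\<in>set w. 0 \<le> x \<and> x \<le> 1"
    and "sum_list w = 1"
  shows "\<exists>f. distributive_family n f \<and> (\<forall>x. in_cube n x \<longrightarrow> DYOWA n f x = OWA w x)"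
  using distributive_family_const_weights[OF assms] DYOWA_const_weights_eq_OWA[of w n] assms
  by blast

end
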